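(* Let $\succeq$ be a standard preference on $X=\Delta([a,b])^S$ with standard representation $(V,u)$, and let $\{\succeq^k\}_{k\ge1}$ be a sequence of standard preferences on $X$, each $\succeq^k$ having a standard representation $(V^k,u^k)$. (1) If $\succeq^k\to\succeq$ in the topology of closed convergence, then $u^k\to u$ and $V^k\to V$ in the compact-open topology (i.e. uniformly on compact sets; equivalently, $u^k(x^k)\to u(x)$ whenever $x^k\to x$ in $[a,b]$, and $V^k(f^k)\to V(f)$ whenever $f^k\to f$ in $X$). (2) If, in addition, all these preferences are aggregative, with aggregative representations $(V^k,u^k,H^k)$ and $(V,u,H)$, then $H^k\to H$ in the compact-open topology on functions $[0,1]^S\to\mathbf{R}$ (equivalently, $H^k(z^k)\to H(z)$ whenever $z^k\to z$ in $[0,1]^S$).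
   Context: Let $S$ be a finite nonempty set and $a<b$ real numbers. $\Delta([a,b])$ denotes the set of Borel probability measures on $[a,b]$ with the topology of weak convergence of measures; $X=\Delta([a,b])^S$ (the set of acts) carries the product topology. For $p\in\Delta([a,b])$, $(p,\dots,p)$ is the constant act equal to $p$; $\delta_x$ is the point mass at $x$. For $p,q\in\Delta([a,b])$, $p$ first-order stochastically dominates $q$ if $\int h\,dp\ge\int h\,dq$ for every bounded continuous nondecreasing $h:[a,b]\to\mathbf{R}$; an act $f$ dominates $g$ if $f(s)$ first-order stochastically dominates $g(s)$ for all $s\in S$. A preference on a topological space $Y$ is a complete and transitive binary relation $\succeq$ that is closed as a subset of $Y\times Y$. A preference $\succeq$ on $X$ is weakly monotone if $f\succeq g$ whenever $f$ dominates $g$. Let $\mathcal U$ be the set of continuous nondecreasing $u:[a,b]\to\mathbf{R}$ with $u(a)=0$, $u(b)=1$. A pair $(V,u)$ is a standard representation if $V:X\to\mathbf{R}$ is continuous, $u\in\mathcal U$, and $V(p,\dots,p)=\int_{[a,b]}u\,dp$ for every $p\in\Delta([a,b])$. A preference $\succeq$ on $X$ is standard if it is weakly monotone and there is a standard representation $(V,u)$ with $V$ representing $\succeq$ (i.e. $f\succeq g\iff V(f)\ge V(g)$). A standard representation $(V,u)$ is aggregative if there is $H:[0,1]^S\to\mathbf{R}$ (the aggregator) with $V(f)=H\big((\int u\,df(s))_{s\in S}\big)$ for all $f\in X$; this is written $(V,u,H)$, and a standard preference is aggregative if it has an aggregative standard representation. Closed convergence: for a sequence $\mathcal F=\{F^n\}$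 of closed subsets of $X\times X$, $\mathrm{Li}(\mathcal F)$ is the set of points $z$ such that every neighborhood of $z$ meets $F^n$ for all sufficiently large $n$, and $\mathrm{Ls}(\mathcal F)$ the set of points $z$ such that every neighborhood of $z$ meets $F^n$ for infinitely many $n$. $F^n\to F$ in the topology of closed convergence iff $\mathrm{Li}(\mathcal F)=F=\mathrm{Ls}(\mathcal F)$. Preferences, as closed subsets of $X\times X$, converge in this sense. *)

theory Defs
  imports "HOL-Analysis.Analysis" "HOL-Probability.Probability"
begin

definition Delta :: "real \<Rightarrow> real \<Rightarrow> real measure set" where
  "Delta a b = {p. prob_space p \<and> sets p = sets (restrict_space borel {a..b})}"

text \<open>Topology of weak convergence on Delta([a,b]): the coarsest topology on
  Delta([a,b]) making every map p |-> integral of h w.r.t. p continuous, for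
  h bounded continuous on [a,b] (boundedness is automatic on the compact [a,b]).\<close>
definition weak_top :: "real \<Rightarrow> real \<Rightarrow> real measure topology" where
  "weak_top a b = topology_generated_by
     {{p \<in> Delta a b. (\<integral>x. h x \<partial>p) \<in> U} | (h :: real \<Rightarrow> real) U. continuous_on {a..b} h \<and> open U}"

definition act_top :: "real \<Rightarrow> real \<Rightarrow> ('s::finite \<Rightarrow> real measure) topology" where
  "act_top a b = product_topology (\<lambda>_. weak_top a b) UNIV"

definition Acts :: "real \<Rightarrow> real \<Rightarrow> ('s::finite \<Rightarrow> real measure) set" where
  "Acts a b = {f. \<forall>s. f s \<in> Delta a b}"

definition fosd :: "real \<Rightarrow> real \<Rightarrow> real measure \<Rightarrow> real measure \<Rightarrow> bool" where
  "fosd a b p q \<longleftrightarrow> (\<forall>h :: real \<Rightarrow> real. continuous_on {a..b} h \<and> mono_on {a..b} h \<longrightarrow>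
       (\<integral>x. h x \<partial>q) \<le> (\<integral>x. h x \<partial>p))"

definition dominates :: "real \<Rightarrow> real \<Rightarrow> ('s::finite \<Rightarrow> real measure) \<Rightarrow> ('s \<Rightarrow> real measure) \<Rightarrow> bool" where
  "dominates a b f g \<longleftrightarrow> (\<forall>s. fosd a b (f s) (g s))"

definition preference :: "real \<Rightarrow> real \<Rightarrow> ('s::finite \<Rightarrow> real measure) rel \<Rightarrow> bool" where
  "preference a b R \<longleftrightarrow> R \<subseteq> Acts a b \<times> Acts a b
     \<and> (\<forall>f\<in>Acts a b. \<forall>g\<in>Acts a b. (f, g) \<in> R \<or> (g, f) \<in> R)
     \<and> trans R
     \<and> closedin (prod_topology (act_top a b) (act_top a b)) R"

definition weakly_monotone :: "real \<Rightarrow> real \<Rightarrow> ('s::finite \<Rightarrow> real measure) rel \<Rightarrow> bool" where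
  "weakly_monotone a b R \<longleftrightarrow>
     (\<forall>f\<in>Acts a b. \<forall>g\<in>Acts a b. dominates a b f g \<longrightarrow> (f, g) \<in> R)"

definition Ufun :: "real \<Rightarrow> real \<Rightarrow> (real \<Rightarrow> real) set" where
  "Ufun a b = {u. continuous_on {a..b} u \<and> mono_on {a..b} u \<and> u a = 0 \<and> u b = 1}"

definition std_rep :: "real \<Rightarrow> real \<Rightarrow> (('s::finite \<Rightarrow> real measure) \<Rightarrow> real) \<Rightarrow> (real \<Rightarrow> real) \<Rightarrow> bool" where
  "std_rep a b V u \<longleftrightarrow> continuous_map (act_top a b) euclideanreal V \<and> u \<in> Ufun a b
     \<and> (\<forall>p\<in>Delta a b. V (\<lambda>s. p) = (\<integral>x. u x \<partial>p))"

definition represents :: "real \<Rightarrow> real \<Rightarrow> ('s::finite \<Rightarrow> real measure) rel \<Rightarrow> (('s \<Rightarrow> real measure) \<Rightarrow> real) \<Rightarrow> bool" where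
  "represents a b R V \<longleftrightarrow> (\<forall>f\<in>Acts a b. \<forall>g\<in>Acts a b. (f, g) \<in> R \<longleftrightarrow> V f \<ge> V g)"

definition standard :: "real \<Rightarrow> real \<Rightarrow> ('s::finite \<Rightarrow> real measure) rel \<Rightarrow> bool" where
  "standard a b R \<longleftrightarrow> preference a b R \<and> weakly_monotone a b R
     \<and> (\<exists>V u. std_rep a b V u \<and> represents a b R V)"

definition aggregative_rep :: "real \<Rightarrow> real \<Rightarrow> (('s::finite \<Rightarrow> real measure) \<Rightarrow> real) \<Rightarrow> (real \<Rightarrow> real)
     \<Rightarrow> (('s \<Rightarrow> real) \<Rightarrow> real) \<Rightarrow> bool" where
  "aggregative_rep a b V u H \<longleftrightarrow> std_rep a b V u
     \<and> (\<forall>f\<in>Acts a b. V f = H (\<lambda>s. \<integral>x. u x \<partial>(f s)))"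

definition Li :: "'a topology \<Rightarrow> (nat \<Rightarrow> 'a set) \<Rightarrow> 'a set" where
  "Li T F = {z \<in> topspace T. \<forall>N. openin T N \<and> z \<in> N \<longrightarrow>
      (\<forall>\<^sub>F n in sequentially. N \<inter> F n \<noteq> {})}"

definition Ls :: "'a topology \<Rightarrow> (nat \<Rightarrow> 'a set) \<Rightarrow> 'a set" where
  "Ls T F = {z \<in> topspace T. \<forall>N. openin T N \<and> z \<in> N \<longrightarrow>
      (\<exists>\<^sub>F n in sequentially. N \<inter> F n \<noteq> {})}"

definition closed_conv :: "'a topology \<Rightarrow> (nat \<Rightarrow> 'a set) \<Rightarrow> 'a set \<Rightarrow> bool" where
  "closed_conv T F A \<longleftrightarrow> Li T F = A \<and> Ls T F = A"

definition co_conv :: "'a topology \<Rightarrow> (nat \<Rightarrow> 'a \<Rightarrow> real) \<Rightarrow> ('a \<Rightarrow> real) \<Rightarrow> bool" where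
  "co_conv T Fs F \<longleftrightarrow> (\<forall>K. compactin T K \<longrightarrow>
     (\<forall>e>0. \<forall>\<^sub>F k in sequentially. \<forall>x\<in>K. \<bar>Fs k x - F x\<bar> < e))"

definition cube_top :: "('s::finite \<Rightarrow> real) topology" where
  "cube_top = subtopology (product_topology (\<lambda>_. euclideanreal) UNIV) {z. \<forall>s. z s \<in> {0..1}}"

end

theory Submission imports Defs begin

text \<open>A standard representation is calibrated by the constant acts paying \<open>b\<close> with probability
  \<open>\<beta>\<close> and \<open>a\<close> otherwise: every standard \<open>V\<close> assigns them the value \<open>\<beta>\<close>, and weak monotonicity
  confines \<open>V\<close> to \<open>[0,1]\<close>. If \<open>V\<^sup>k(g) \<ge> \<beta> > V(f)\<close> for \<open>g\<close> arbitrarily close to \<open>f\<close> and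
  infinitely many \<open>k\<close>, the pairs \<open>(g, c\<^sub>\<beta>) \<in> \<succeq>\<^sup>k\<close> accumulate at \<open>(f, c\<^sub>\<beta>)\<close>, which then lies in \<open>\<succeq>\<close>,
  contradicting \<open>V(f) < \<beta>\<close>; symmetrically from below. Together with continuity of \<open>V\<close> this
  makes \<open>V\<^sup>k \<rightarrow> V\<close> locally uniformly, hence uniformly on compacta. The statements about \<open>u\<close> and
  \<open>H\<close> follow by composing with the continuous maps \<open>x \<mapsto> \<delta>\<^sub>x\<close> and \<open>z \<mapsto> (c\<^bsub>z(s)\<^esub>)\<^sub>s\<close>.\<close>

definition lottery :: "real \<Rightarrow> real \<Rightarrow> real \<Rightarrow> real measure" where
  "lottery a b \<beta> = distr (measure_pmf (bernoulli_pmf \<beta>)) (restrict_space borel {a..b})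
     (\<lambda>t. if t then b else a)"

lemma lottery_in_Delta:
  assumes "a \<le> b" "\<beta> \<in> {0..1}"
  shows "lottery a b \<beta> \<in> Delta a b"
proof -
  have "(\<lambda>t. if t then b else a) \<in> measure_pmf (bernoulli_pmf \<beta>) \<rightarrow>\<^sub>M restrict_space borel {a..b}"
    using assms by (auto simp: space_restrict_space)
  from prob_space.prob_space_distr[OF prob_space_measure_pmf this] show ?thesis
    by (simp add: Delta_def lottery_def)
qed

lemma integral_lottery:
  assumes "a \<le> b" "\<beta> \<in> {0..1}" "continuous_on {a..b} h"
  shows "(\<integral>t. h t \<partial>lottery a b \<beta>) = h b * \<beta> + h a * (1 - \<beta>)"
proof -
  have "(\<lambda>t. if t then b else a) \<in> measure_pmf (bernoulli_pmf \<beta>) \<rightarrow>\<^sub>M restrict_space borel {a..b}"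
    using assms by (auto simp: space_restrict_space)
  from integral_distr[OF this borel_measurable_continuous_on_restrict[OF assms(3)]] show ?thesis
    using assms by (simp add: lottery_def)
qed

lemma return_in_Delta: "x \<in> {a..b} \<Longrightarrow> return (restrict_space borel {a..b}) x \<in> Delta a b"
  by (simp add: Delta_def prob_space_return space_restrict_space)

lemma integral_return_Icc:
  fixes h :: "real \<Rightarrow> real"
  shows "x \<in> {a..b} \<Longrightarrow> continuous_on {a..b} h \<Longrightarrow> (\<integral>t. h t \<partial>return (restrict_space borel {a..b}) x) = h x"
  by (auto simp: space_restrict_space intro!: integral_return borel_measurable_continuous_on_restrict)

lemma integral_Delta_bounds:
  fixes h :: "real \<Rightarrow> real"
  assumes p: "p \<in> Delta a b" and "a \<le> b" and h: "continuous_on {a..b} h" "mono_on {a..b} h"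
  shows "h a \<le> (\<integral>t. h t \<partial>p)" "(\<integral>t. h t \<partial>p) \<le> h b"
proof -
  interpret prob_space p using p by (simp add: Delta_def)
  have sets: "sets p = sets (restrict_space borel {a..b})" using p by (simp add: Delta_def)
  have space: "space p = {a..b}"
    using sets_eq_imp_space_eq[OF sets] by (simp add: space_restrict_space)
  have meas: "h \<in> borel_measurable p"
    unfolding measurable_cong_sets[OF sets refl] by (rule borel_measurable_continuous_on_restrict[OF h(1)])
  obtain B where "\<And>t. t \<in> {a..b} \<Longrightarrow> norm (h t) \<le> B"
    using compact_imp_bounded[OF compact_continuous_image[OF h(1) compact_Icc]]
    unfolding bounded_iff by (metis imageI)
  then have "integrable p h"
    using space by (intro integrable_const_bound[OF _ meas, where B=B] AE_I2) auto
  then have "(\<integral>t. h a \<partial>p) \<le> (\<integral>t. h t \<partial>p)" "(\<integral>t. h t \<partial>p) \<le> (\<integral>t. h b \<partial>p)"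
    by (intro integral_mono; use space h(2) \<open>a \<le> b\<close> in \<open>auto intro: mono_onD\<close>)+
  then show "h a \<le> (\<integral>t. h t \<partial>p)" "(\<integral>t. h t \<partial>p) \<le> h b" by (simp_all add: prob_space)
qed

lemma topspace_weak_top: "topspace (weak_top a b) = Delta a b"
proof -
  have "Delta a b = {p \<in> Delta a b. (\<integral>x. 0 \<partial>p) \<in> UNIV}" by simp
  then show ?thesis unfolding weak_top_def topology_generated_by_topspace by blast
qed

lemma topspace_act_top: "topspace (act_top a b) = Acts a b"
  by (auto simp: act_top_def Acts_def topspace_weak_top PiE_UNIV_domain)

lemma continuous_map_into_weak_top:
  assumes "\<And>x. x \<in> topspace X \<Longrightarrow> \<phi> x \<in> Delta a b"
    and "\<And>h. continuous_on {a..b} h \<Longrightarrow> continuous_map X euclideanreal (\<lambda>x. \<integral>t. h t \<partial>\<phi> x)"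
  shows "continuous_map X (weak_top a b) \<phi>"
  unfolding weak_top_def
proof (rule continuous_on_generated_topo)
  fix W assume "W \<in> {{p \<in> Delta a b. (\<integral>x. h x \<partial>p) \<in> U} | (h :: real \<Rightarrow> real) (U :: real set). continuous_on {a..b} h \<and> open U}"
  then obtain h :: "real \<Rightarrow> real" and U :: "real set"
    where "continuous_on {a..b} h" "open U" and W: "W = {p \<in> Delta a b. (\<integral>x. h x \<partial>p) \<in> U}"
    by blast
  then have "openin X {x \<in> topspace X. (\<integral>t. h t \<partial>\<phi> x) \<in> U}"
    using assms(2) by (intro openin_continuous_map_preimage) auto
  moreover have "\<phi> -` W \<inter> topspace X = {x \<in> topspace X. (\<integral>t. h t \<partial>\<phi> x) \<in> U}"
    using assms(1) W by auto
  ultimately show "openin X (\<phi> -` W \<inter> topspace X)" by simp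
next
  show "\<phi> ` topspace X \<subseteq> \<Union>{{p \<in> Delta a b. (\<integral>x. h x \<partial>p) \<in> U} | (h :: real \<Rightarrow> real) (U :: real set). continuous_on {a..b} h \<and> open U}"
  proof -
    have cover: "\<Union>{{p \<in> Delta a b. (\<integral>x. h x \<partial>p) \<in> U} | (h :: real \<Rightarrow> real) (U :: real set).
            continuous_on {a..b} h \<and> open U} = Delta a b"
      using topspace_weak_top[of a b] unfolding weak_top_def topology_generated_by_topspace .
    show ?thesis unfolding cover using assms(1) by blast
  qed
qed

lemma co_conv_if_locally_uniform:
  assumes "\<And>x e. x \<in> topspace T \<Longrightarrow> e > 0 \<Longrightarrow>
     \<exists>N. openin T N \<and> x \<in> N \<and> (\<forall>\<^sub>F k in sequentially. \<forall>y\<in>N. \<bar>Fs k y - F y\<bar> < e)"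
  shows "co_conv T Fs F"
  unfolding co_conv_def
proof (intro allI impI)
  fix K and e :: real assume K: "compactin T K" and "e > 0"
  then have "\<forall>x\<in>K. \<exists>N. openin T N \<and> x \<in> N \<and> (\<forall>\<^sub>F k in sequentially. \<forall>y\<in>N. \<bar>Fs k y - F y\<bar> < e)"
    using assms compactin_subset_topspace by blast
  then obtain N where N: "\<forall>x\<in>K.
      openin T (N x) \<and> x \<in> N x \<and> (\<forall>\<^sub>F k in sequentially. \<forall>y\<in>N x. \<bar>Fs k y - F y\<bar> < e)"
    by (rule bchoice[THEN exE]) blast
  have "\<exists>\<F>. finite \<F> \<and> \<F> \<subseteq> N ` K \<and> K \<subseteq> \<Union>\<F>"
    using K N unfolding compactin_def by (intro conjunct2[OF K[unfolded compactin_def], rule_format]) auto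
  then obtain G where G: "finite G" "G \<subseteq> K" "K \<subseteq> \<Union>(N ` G)"
    by (metis finite_subset_image)
  have "\<forall>\<^sub>F k in sequentially. \<forall>x\<in>G. \<forall>y\<in>N x. \<bar>Fs k y - F y\<bar> < e"
    using G N by (subst eventually_ball_finite_distrib) (auto dest: bspec)
  then show "\<forall>\<^sub>F k in sequentially. \<forall>x\<in>K. \<bar>Fs k x - F x\<bar> < e"
    by eventually_elim (use G in blast)
qed

lemma co_conv_compose:
  assumes "co_conv T Fs F" and "continuous_map Y T \<phi>"
    and "\<And>k y. y \<in> topspace Y \<Longrightarrow> Gs k y = Fs k (\<phi> y)"
    and "\<And>y. y \<in> topspace Y \<Longrightarrow> G y = F (\<phi> y)"
  shows "co_conv Y Gs G"
  unfolding co_conv_def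
proof (intro allI impI)
  fix K and e :: real assume K: "compactin Y K" and "e > 0"
  then have "\<forall>\<^sub>F k in sequentially. \<forall>x\<in>\<phi> ` K. \<bar>Fs k x - F x\<bar> < e"
    using assms(1,2) image_compactin unfolding co_conv_def by blast
  then show "\<forall>\<^sub>F k in sequentially. \<forall>x\<in>K. \<bar>Gs k x - G x\<bar> < e"
    by eventually_elim (use K compactin_subset_topspace assms(3,4) in fastforce)
qed

lemma Ls_converse_subset:
  "Ls (prod_topology X X) (\<lambda>n. (F n)\<inverse>) \<subseteq> (Ls (prod_topology X X) F)\<inverse>"
proof
  fix z assume z: "z \<in> Ls (prod_topology X X) (\<lambda>n. (F n)\<inverse>)"
  let ?swap = "\<lambda>(x, y). (y, x)"
  have "?swap z \<in> Ls (prod_topology X X) F"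
    unfolding Ls_def
  proof (intro CollectI conjI allI impI)
    show "?swap z \<in> topspace (prod_topology X X)" using z by (auto simp: Ls_def)
  next
    fix W assume W: "openin (prod_topology X X) W \<and> ?swap z \<in> W"
    then have "openin (prod_topology X X) (?swap ` W)"
      using homeomorphic_map_openness_eq[OF homeomorphic_map_swap] by metis
    moreover have "z \<in> ?swap ` W" using W by (auto simp: image_iff split: prod.splits)
    ultimately have "\<exists>\<^sub>F n in sequentially. ?swap ` W \<inter> (F n)\<inverse> \<noteq> {}"
      using z by (auto simp: Ls_def)
    then show "\<exists>\<^sub>F n in sequentially. W \<inter> F n \<noteq> {}"
      by (rule frequently_elim1) auto
  qed
  then show "z \<in> (Ls (prod_topology X X) F)\<inverse>" by (auto split: prod.splits)
qed

lemma Ls_calibrated_upper: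
  fixes T :: "'a topology" and Vk :: "nat \<Rightarrow> 'a \<Rightarrow> real" and V :: "'a \<Rightarrow> real"
  assumes repk: "\<And>k f g. f \<in> topspace T \<Longrightarrow> g \<in> topspace T \<Longrightarrow> Vk k g \<le> Vk k f \<Longrightarrow> (f, g) \<in> Rk k"
    and rep: "\<And>f g. f \<in> topspace T \<Longrightarrow> g \<in> topspace T \<Longrightarrow> (f, g) \<in> R \<Longrightarrow> V g \<le> V f"
    and Ls: "Ls (prod_topology T T) Rk \<subseteq> R"
    and c: "c \<in> topspace T" "\<And>k. Vk k c = V c"
    and f: "f \<in> topspace T" "V f < V c"
  shows "\<exists>N. openin T N \<and> f \<in> N \<and> (\<forall>\<^sub>F k in sequentially. \<forall>g\<in>N. Vk k g < V c)"
proof (rule ccontr)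
  assume "\<not> ?thesis"
  then have often: "\<exists>\<^sub>F k in sequentially. \<exists>g\<in>N. V c \<le> Vk k g" if "openin T N" "f \<in> N" for N
    using that by (simp add: not_eventually not_less)
  have "(f, c) \<in> Ls (prod_topology T T) Rk"
    unfolding Ls_def
  proof (intro CollectI conjI allI impI)
    show "(f, c) \<in> topspace (prod_topology T T)" using f c by simp
  next
    fix W assume "openin (prod_topology T T) W \<and> (f, c) \<in> W"
    then obtain U U' where U: "openin T U" "f \<in> U" "c \<in> U'" "U \<times> U' \<subseteq> W"
      unfolding openin_prod_topology_alt by meson
    show "\<exists>\<^sub>F k in sequentially. W \<inter> Rk k \<noteq> {}"
      using often[OF U(1,2)]
    proof (rule frequently_elim1)
      fix k assume "\<exists>g\<in>U. V c \<le> Vk k g"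
      then obtain g where "g \<in> U" "Vk k c \<le> Vk k g" using c(2) by metis
      then have "(g, c) \<in> W \<inter> Rk k"
        using U repk[of g c k] c(1) openin_subset[OF U(1)] by auto
      then show "W \<inter> Rk k \<noteq> {}" by blast
    qed
  qed
  then show False using Ls rep[OF f(1) c(1)] f(2) by fastforce
qed

lemma Ls_calibrated_lower:
  fixes T :: "'a topology" and Vk :: "nat \<Rightarrow> 'a \<Rightarrow> real" and V :: "'a \<Rightarrow> real"
  assumes repk: "\<And>k f g. f \<in> topspace T \<Longrightarrow> g \<in> topspace T \<Longrightarrow> Vk k g \<le> Vk k f \<Longrightarrow> (f, g) \<in> Rk k"
    and rep: "\<And>f g. f \<in> topspace T \<Longrightarrow> g \<in> topspace T \<Longrightarrow> (f, g) \<in> R \<Longrightarrow> V g \<le> V f"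
    and Ls: "Ls (prod_topology T T) Rk \<subseteq> R"
    and c: "c \<in> topspace T" "\<And>k. Vk k c = V c"
    and f: "f \<in> topspace T" "V c < V f"
  shows "\<exists>N. openin T N \<and> f \<in> N \<and> (\<forall>\<^sub>F k in sequentially. \<forall>g\<in>N. V c < Vk k g)"
proof -
  \<comment> \<open>the converse relations are represented by \<open>-V\<^sub>k\<close> and \<open>-V\<close>\<close>
  have "Ls (prod_topology T T) (\<lambda>k. (Rk k)\<inverse>) \<subseteq> R\<inverse>"
    using Ls_converse_subset Ls by blast
  from Ls_calibrated_upper[where Vk="\<lambda>k g. - Vk k g" and V="\<lambda>g. - V g", OF _ _ this c(1) _ f(1)]
  show ?thesis using repk rep c(2) f(2) by force
qed

lemma std_rep_lottery:
  assumes "std_rep a b V u" "a \<le> b" "\<beta> \<in> {0..1}"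
  shows "V (\<lambda>s. lottery a b \<beta>) = \<beta>"
  using assms lottery_in_Delta[of a b \<beta>] integral_lottery[of a b \<beta> u]
  by (simp add: std_rep_def Ufun_def)

lemma std_rep_return:
  assumes "std_rep a b V u" "x \<in> {a..b}"
  shows "V (\<lambda>s. return (restrict_space borel {a..b}) x) = u x"
  using assms return_in_Delta[of x a b] integral_return_Icc[of x a b u]
  by (simp add: std_rep_def Ufun_def)

lemma std_rep_range:
  assumes "a \<le> b" "std_rep a b V u" "represents a b R V" "weakly_monotone a b R" "f \<in> Acts a b"
  shows "V f \<in> {0..1}"
proof -
  let ?best = "\<lambda>s. lottery a b 1" and ?worst = "\<lambda>s. lottery a b 0"
  have acts: "?best \<in> Acts a b" "?worst \<in> Acts a b"
    using lottery_in_Delta[OF \<open>a \<le> b\<close>] by (auto simp: Acts_def)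
  have "dominates a b ?best f" "dominates a b f ?worst"
    using assms(1,5) integral_lottery[OF \<open>a \<le> b\<close>] integral_Delta_bounds[OF _ \<open>a \<le> b\<close>]
    by (auto simp: dominates_def fosd_def Acts_def)
  then have "V f \<le> V ?best" "V ?worst \<le> V f"
    using assms(3-5) acts by (auto simp: weakly_monotone_def represents_def)
  then show ?thesis using std_rep_lottery[OF assms(2,1)] by simp
qed

lemma continuous_map_return_act:
  "continuous_map (top_of_set {a..b}) (act_top a b) (\<lambda>x (s::'s::finite). return (restrict_space borel {a..b}) x)"
  unfolding act_top_def continuous_map_componentwise_UNIV
proof
  show "continuous_map (top_of_set {a..b}) (weak_top a b) (\<lambda>x. return (restrict_space borel {a..b}) x)"
  proof (rule continuous_map_into_weak_top)
    fix h :: "real \<Rightarrow> real" assume h: "continuous_on {a..b} h"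
    show "continuous_map (top_of_set {a..b}) euclideanreal
        (\<lambda>x. \<integral>t. h t \<partial>return (restrict_space borel {a..b}) x)"
      by (rule continuous_map_eq[where f=h]) (simp_all add: h integral_return_Icc)
  qed (simp add: return_in_Delta)
qed

lemma continuous_map_lottery_act:
  assumes "a \<le> b"
  shows "continuous_map (cube_top :: ('s::finite \<Rightarrow> real) topology) (act_top a b) (\<lambda>z s. lottery a b (z s))"
  unfolding act_top_def continuous_map_componentwise_UNIV
proof
  fix s :: 's
  show "continuous_map cube_top (weak_top a b) (\<lambda>z. lottery a b (z s))"
  proof (rule continuous_map_into_weak_top)
    fix h :: "real \<Rightarrow> real" assume h: "continuous_on {a..b} h"
    have "continuous_map cube_top euclideanreal (\<lambda>z::'s \<Rightarrow> real. h b * z s + h a * (1 - z s))"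
      unfolding cube_top_def by (intro continuous_map_from_subtopology continuous_intros) auto
    then show "continuous_map cube_top euclideanreal (\<lambda>z. \<integral>t. h t \<partial>lottery a b (z s))"
      by (rule continuous_map_eq) (simp add: integral_lottery[OF assms _ h] cube_top_def)
  qed (use assms lottery_in_Delta in \<open>simp add: cube_top_def\<close>)
qed

locale standard_rep_limit =
  fixes a b :: real
    and R :: "('s::finite \<Rightarrow> real measure) rel" and V :: "('s \<Rightarrow> real measure) \<Rightarrow> real"
    and u :: "real \<Rightarrow> real"
    and Rk :: "nat \<Rightarrow> ('s \<Rightarrow> real measure) rel" and Vk :: "nat \<Rightarrow> ('s \<Rightarrow> real measure) \<Rightarrow> real"
    and uk :: "nat \<Rightarrow> real \<Rightarrow> real"
  assumes le: "a \<le> b"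
    and rep: "std_rep a b V u" "represents a b R V" "weakly_monotone a b R"
    and repk: "\<And>k. std_rep a b (Vk k) (uk k)" "\<And>k. represents a b (Rk k) (Vk k)"
      "\<And>k. weakly_monotone a b (Rk k)"
    and Ls_subset: "Ls (prod_topology (act_top a b) (act_top a b)) Rk \<subseteq> R"
begin

lemma value_range: "f \<in> Acts a b \<Longrightarrow> V f \<in> {0..1}"
  using std_rep_range[OF le rep] .

lemma value_range_seq: "f \<in> Acts a b \<Longrightarrow> Vk k f \<in> {0..1}"
  using std_rep_range[OF le repk] .

lemma calibrating_act:
  assumes "\<beta> \<in> {0..1}"
  shows "(\<lambda>s. lottery a b \<beta>) \<in> topspace (act_top a b)"
    and "V (\<lambda>s. lottery a b \<beta>) = \<beta>" "Vk k (\<lambda>s. lottery a b \<beta>) = \<beta>"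
  using assms lottery_in_Delta[OF le] std_rep_lottery[OF rep(1) le] std_rep_lottery[OF repk(1) le]
  by (auto simp: topspace_act_top Acts_def)

lemma eventually_values_below:
  assumes f: "f \<in> Acts a b" and "e > 0"
  shows "\<exists>N. openin (act_top a b) N \<and> f \<in> N \<and> (\<forall>\<^sub>F k in sequentially. \<forall>g\<in>N. Vk k g < V f + e)"
proof (cases "V f + e \<le> 1")
  case True
  then have \<beta>: "V f + e \<in> {0..1}" using value_range[OF f] \<open>e > 0\<close> by simp
  have "\<exists>N. openin (act_top a b) N \<and> f \<in> N \<and> (\<forall>\<^sub>F k in sequentially. \<forall>g\<in>N. Vk k g < V (\<lambda>s. lottery a b (V f + e)))"
    by (rule Ls_calibrated_upper[where V=V and Vk=Vk, OF _ _ Ls_subset calibrating_act(1)[OF \<beta>]])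
      (use f repk(2) rep(2) calibrating_act(2,3)[OF \<beta>] \<open>e > 0\<close> in
        \<open>auto simp: represents_def topspace_act_top\<close>)
  then show ?thesis using calibrating_act(2)[OF \<beta>] by simp
next
  case False
  have "Vk k g < V f + e" if "g \<in> Acts a b" for k g
    using False value_range_seq[OF that, of k] by simp
  then show ?thesis
    using f openin_topspace[of "act_top a b"] unfolding topspace_act_top by (blast intro: always_eventually)
qed

lemma eventually_values_above:
  assumes f: "f \<in> Acts a b" and "e > 0"
  shows "\<exists>N. openin (act_top a b) N \<and> f \<in> N \<and> (\<forall>\<^sub>F k in sequentially. \<forall>g\<in>N. V f - e < Vk k g)"
proof (cases "0 \<le> V f - e")
  case True
  then have \<beta>: "V f - e \<in> {0..1}" using value_range[OF f] \<open>e > 0\<close> by simp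
  have "\<exists>N. openin (act_top a b) N \<and> f \<in> N \<and> (\<forall>\<^sub>F k in sequentially. \<forall>g\<in>N. V (\<lambda>s. lottery a b (V f - e)) < Vk k g)"
    by (rule Ls_calibrated_lower[where V=V and Vk=Vk, OF _ _ Ls_subset calibrating_act(1)[OF \<beta>]])
      (use f repk(2) rep(2) calibrating_act(2,3)[OF \<beta>] \<open>e > 0\<close> in
        \<open>auto simp: represents_def topspace_act_top\<close>)
  then show ?thesis using calibrating_act(2)[OF \<beta>] by simp
next
  case False
  have "V f - e < Vk k g" if "g \<in> Acts a b" for k g
    using False value_range_seq[OF that, of k] by simp
  then show ?thesis
    using f openin_topspace[of "act_top a b"] unfolding topspace_act_top by (blast intro: always_eventually)
qed

lemma co_conv_values: "co_conv (act_top a b) Vk V"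
proof (rule co_conv_if_locally_uniform)
  fix f :: "'s \<Rightarrow> real measure" and e :: real assume f: "f \<in> topspace (act_top a b)" and "e > 0"
  then have "f \<in> Acts a b" "e / 2 > 0" by (simp_all add: topspace_act_top)
  obtain N1 where N1: "openin (act_top a b) N1" "f \<in> N1"
      "\<forall>\<^sub>F k in sequentially. \<forall>g\<in>N1. Vk k g < V f + e / 2"
    using eventually_values_below[OF \<open>f \<in> Acts a b\<close> \<open>e / 2 > 0\<close>] by blast
  obtain N2 where N2: "openin (act_top a b) N2" "f \<in> N2"
      "\<forall>\<^sub>F k in sequentially. \<forall>g\<in>N2. V f - e / 2 < Vk k g"
    using eventually_values_above[OF \<open>f \<in> Acts a b\<close> \<open>e / 2 > 0\<close>] by blast
  define N3 where "N3 = {g \<in> topspace (act_top a b). V g \<in> {V f - e / 2 <..< V f + e / 2}}"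
  have "openin (act_top a b) N3"
    unfolding N3_def using rep(1) by (intro openin_continuous_map_preimage) (auto simp: std_rep_def)
  moreover have "f \<in> N3" using f \<open>e > 0\<close> by (simp add: N3_def)
  moreover
  have "\<forall>\<^sub>F k in sequentially. \<forall>g\<in>N1 \<inter> N2 \<inter> N3. \<bar>Vk k g - V g\<bar> < e"
    using N1(3) N2(3) by eventually_elim (auto simp: N3_def abs_less_iff)
  ultimately show "\<exists>N. openin (act_top a b) N \<and> f \<in> N \<and> (\<forall>\<^sub>F k in sequentially. \<forall>g\<in>N. \<bar>Vk k g - V g\<bar> < e)"
    using N1(1,2) N2(1,2) by (intro exI[of _ "N1 \<inter> N2 \<inter> N3"]) auto
qed

lemma co_conv_utilities: "co_conv (top_of_set {a..b}) uk u"
  by (rule co_conv_compose[OF co_conv_values continuous_map_return_act])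
    (simp_all add: std_rep_return[OF repk(1)] std_rep_return[OF rep(1)])

lemma co_conv_aggregators:
  assumes "aggregative_rep a b V u H" "\<And>k. aggregative_rep a b (Vk k) (uk k) (Hk k)"
  shows "co_conv cube_top Hk H"
proof -
  have aggregator_eq: "W (\<lambda>s. lottery a b (z s)) = G z"
    if z: "z \<in> topspace cube_top" and "aggregative_rep a b W w G" for z :: "'s \<Rightarrow> real" and W w G
  proof -
    have "z s \<in> {0..1}" for s using z by (simp add: cube_top_def)
    moreover have "std_rep a b W w" using that by (simp add: aggregative_rep_def)
    ultimately show ?thesis
      using that le lottery_in_Delta integral_lottery
      by (simp add: aggregative_rep_def std_rep_def Ufun_def Acts_def)
  qed
  show ?thesis
    by (rule co_conv_compose[OF co_conv_values continuous_map_lottery_act[OF le]])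
      (simp_all add: aggregator_eq[OF _ assms(1)] aggregator_eq[OF _ assms(2)])
qed

end

theorem mainTheorem1:
  fixes a b :: real
    and R :: "('s::finite \<Rightarrow> real measure) rel"
    and V :: "('s \<Rightarrow> real measure) \<Rightarrow> real" and u :: "real \<Rightarrow> real"
    and Rk :: "nat \<Rightarrow> ('s \<Rightarrow> real measure) rel"
    and Vk :: "nat \<Rightarrow> ('s \<Rightarrow> real measure) \<Rightarrow> real" and uk :: "nat \<Rightarrow> real \<Rightarrow> real"
  assumes ab: "a < b"
    and std: "standard a b R" and rep: "std_rep a b V u" "represents a b R V"
    and stdk: "\<And>k. standard a b (Rk k)"
    and repk: "\<And>k. std_rep a b (Vk k) (uk k)" "\<And>k. represents a b (Rk k) (Vk k)"
    and conv: "closed_conv (prod_topology (act_top a b) (act_top a b)) Rk R"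
  shows "co_conv (top_of_set {a..b}) uk u \<and> co_conv (act_top a b) Vk V
    \<and> (\<forall>H Hk. aggregative_rep a b V u H \<and> (\<forall>k. aggregative_rep a b (Vk k) (uk k) (Hk k))
          \<longrightarrow> co_conv cube_top Hk H)"
proof -
  interpret standard_rep_limit a b R V u Rk Vk uk
    using ab std stdk rep repk conv by unfold_locales (auto simp: standard_def closed_conv_def)
  show ?thesis using co_conv_utilities co_conv_values co_conv_aggregators by blast
qed

end
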